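(* Let $f : \mathbb{R} \to \mathbb{R}$ and $g : \mathbb{R}^n \to \mathbb{R}$, and let $\bar x \in \mathbb{R}^n$. Let $g_{ave}$ be a concave underestimator of $g$ at $\bar x$, let $f_{ave}$ be a concave underestimator of $f$ at $g(\bar x)$, and let $g^{vex}$ be a convex overestimator of $g$ at $\bar x$. Then \[ h(x) := \min \{ f_{ave}(g_{ave}(x)),\ f_{ave}(g^{vex}(x)) \} \] is a concave underestimator of $x \mapsto f(g(x))$ at $\bar x$.
   Context: For a function $\phi : \mathbb{R}^d \to \mathbb{R}$ and a point $\bar y \in \mathbb{R}^d$, a function $\phi_{ave} : \mathbb{R}^d \to \mathbb{R}$ is a concave underestimator of $\phi$ at $\bar y$ if $\phi_{ave}$ is concave, $\phi_{ave}(y) \le \phi(y)$ for all $y \in \mathbb{R}^d$, and $\phi_{ave}(\bar y) = \phi(\bar y)$. Similarly, $\phi^{vex} : \mathbb{R}^d \to \mathbb{R}$ is a convex overestimator of $\phi$ at $\bar y$ if $\phi^{vex}$ is convex, $\phi^{vex}(y) \ge \phi(y)$ for all $y \in \mathbb{R}^d$, and $\phi^{vex}(\bar y) = \phi(\bar y)$. *)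

theory Defs
  imports "HOL-Analysis.Analysis"
begin

definition concave_underestimator ::
  "('a::real_vector \<Rightarrow> real) \<Rightarrow> 'a \<Rightarrow> ('a \<Rightarrow> real) \<Rightarrow> bool" where
  "concave_underestimator phi ybar psi \<longleftrightarrow>
     concave_on UNIV psi \<and> (\<forall>y. psi y \<le> phi y) \<and> psi ybar = phi ybar"

definition convex_overestimator ::
  "('a::real_vector \<Rightarrow> real) \<Rightarrow> 'a \<Rightarrow> ('a \<Rightarrow> real) \<Rightarrow> bool" where
  "convex_overestimator phi ybar psi \<longleftrightarrow>
     convex_on UNIV psi \<and> (\<forall>y. psi y \<ge> phi y) \<and> psi ybar = phi ybar"

end

theory Submission
  imports Defs
begin

text \<open>A concave function on an interval is bounded below by the smaller of its two endpoint
  values. At a convex combination \<open>x = s x1 + t x2\<close>, concavity of \<open>g_ave\<close> and convexity of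
  \<open>g_vex\<close> put both \<open>g_ave x\<close> and \<open>g_vex x\<close> into \<open>[A, B]\<close>, where
  \<open>A = s g_ave x1 + t g_ave x2\<close> and \<open>B = s g_vex x1 + t g_vex x2\<close>; hence
  \<open>h x \<ge> min (f_ave A) (f_ave B)\<close>, while concavity of \<open>f_ave\<close> makes both \<open>f_ave A\<close> and
  \<open>f_ave B\<close> at least \<open>s h x1 + t h x2\<close>. The endpoint bound at \<open>g x \<in> [g_ave x, g_vex x]\<close>
  gives \<open>h \<le> f_ave \<circ> g \<le> f \<circ> g\<close>.\<close>

lemma concave_on_ge_min_within:
  fixes F :: "real \<Rightarrow> real"
  assumes F: "concave_on T F" and "a \<in> T" "b \<in> T" "y \<in> {a..b}"
  shows "min (F a) (F b) \<le> F y"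
proof -
  have "is_interval T"
    using concave_on_imp_convex[OF F] is_interval_convex_1 by blast
  then have "{a..b} \<subseteq> T"
    using mem_is_interval_1_I[OF _ \<open>a \<in> T\<close> \<open>b \<in> T\<close>] by (intro subsetI) simp
  then have "concave_on {a..b} F"
    using F convex_on_subset unfolding concave_on_def by blast
  then show ?thesis
    using concave_on_ge_min \<open>y \<in> {a..b}\<close> by blast
qed

lemma concave_on_min_comp_between:
  fixes lo hi :: "'a::real_vector \<Rightarrow> real" and F :: "real \<Rightarrow> real"
  assumes F: "concave_on T F"
    and lo: "concave_on S lo" and hi: "convex_on S hi"
    and lo_le_hi: "\<And>x. x \<in> S \<Longrightarrow> lo x \<le> hi x"
    and lo_T: "lo ` S \<subseteq> T" and hi_T: "hi ` S \<subseteq> T"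
  shows "concave_on S (\<lambda>x. min (F (lo x)) (F (hi x)))"
  unfolding concave_on_iff
proof (intro conjI ballI allI impI)
  show "convex S"
    using concave_on_imp_convex[OF lo] .
  have "convex T"
    using concave_on_imp_convex[OF F] .
  let ?h = "\<lambda>x. min (F (lo x)) (F (hi x))"
  fix x y :: 'a and s t :: real
  assume x: "x \<in> S" and y: "y \<in> S" and s: "s \<ge> 0" and t: "t \<ge> 0" and st: "s + t = 1"
  define z where "z = s *\<^sub>R x + t *\<^sub>R y"
  define A where "A = s * lo x + t * lo y"
  define B where "B = s * hi x + t * hi y"
  have "z \<in> S"
    using convexD[OF \<open>convex S\<close> x y s t st] by (simp add: z_def)
  have A_le: "A \<le> lo z"
    using lo x y s t st unfolding concave_on_iff A_def z_def by blast
  have le_B: "hi z \<le> B"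
    using hi x y s t st unfolding convex_on_def B_def z_def by blast
  have in_T: "lo x \<in> T" "lo y \<in> T" "hi x \<in> T" "hi y \<in> T"
    using lo_T hi_T x y by auto
  have "A \<in> T" "B \<in> T"
    using convexD[OF \<open>convex T\<close> _ _ s t st] in_T unfolding A_def B_def by simp_all
  then have min_le_h: "min (F A) (F B) \<le> ?h z"
    using concave_on_ge_min_within[OF F] A_le le_B lo_le_hi[OF \<open>z \<in> S\<close>] by simp
  have "s * ?h x + t * ?h y \<le> s * F (lo x) + t * F (lo y)"
    using s t by (intro add_mono mult_left_mono) auto
  also have "\<dots> \<le> F A"
    using F in_T s t st unfolding A_def by (auto simp: concave_on_iff)
  finally have le_FA: "s * ?h x + t * ?h y \<le> F A" .
  have "s * ?h x + t * ?h y \<le> s * F (hi x) + t * F (hi y)"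
    using s t by (intro add_mono mult_left_mono) auto
  also have "\<dots> \<le> F B"
    using F in_T s t st unfolding B_def by (auto simp: concave_on_iff)
  finally have le_FB: "s * ?h x + t * ?h y \<le> F B" .
  show "s * ?h x + t * ?h y \<le> ?h (s *\<^sub>R x + t *\<^sub>R y)"
    using le_FA le_FB min_le_h unfolding z_def by linarith
qed

theorem theorem1:
  fixes f :: "real \<Rightarrow> real" and g :: "real ^ 'n \<Rightarrow> real" and xbar :: "real ^ 'n"
    and f_ave :: "real \<Rightarrow> real" and g_ave g_vex :: "real ^ 'n \<Rightarrow> real"
  assumes "concave_underestimator g xbar g_ave"
    and "concave_underestimator f (g xbar) f_ave"
    and "convex_overestimator g xbar g_vex"
  shows "concave_underestimator (\<lambda>x. f (g x)) xbar
           (\<lambda>x. min (f_ave (g_ave x)) (f_ave (g_vex x)))"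
proof -
  have g_ave: "concave_on UNIV g_ave" "\<And>x. g_ave x \<le> g x" "g_ave xbar = g xbar"
    using assms(1) by (auto simp: concave_underestimator_def)
  have f_ave: "concave_on UNIV f_ave" "\<And>y. f_ave y \<le> f y" "f_ave (g xbar) = f (g xbar)"
    using assms(2) by (auto simp: concave_underestimator_def)
  have g_vex: "convex_on UNIV g_vex" "\<And>x. g x \<le> g_vex x" "g_vex xbar = g xbar"
    using assms(3) by (auto simp: convex_overestimator_def)
  have "concave_on UNIV (\<lambda>x. min (f_ave (g_ave x)) (f_ave (g_vex x)))"
    using g_ave(2) g_vex(2) order_trans
    by (intro concave_on_min_comp_between[OF f_ave(1) g_ave(1) g_vex(1)]) blast+
  moreover have "min (f_ave (g_ave x)) (f_ave (g_vex x)) \<le> f (g x)" for x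
    using concave_on_ge_min_within[OF f_ave(1), of "g_ave x" "g_vex x" "g x"]
      g_ave(2) g_vex(2) f_ave(2)[of "g x"] by simp
  ultimately show ?thesis
    using g_ave(3) g_vex(3) f_ave(3) by (simp add: concave_underestimator_def)
qed

end
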